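(* Let $K$ be a field and $(Q,f,g,c,W)$ as in the setting below, with completed Jacobian algebra $\Lambda$, and assume that either $Q$ satisfies $(\star)$, or $Q$ satisfies $(\diamond)$ and $\prod_{\alpha\in\Omega}c_\alpha\neq1$ for $\Omega$ a set of representatives of the $g$-orbits. Then for every arrow $\alpha\in Q_1$, $$\alpha\cdot f(\alpha)\cdot f^2(\alpha)\cdot\alpha=0\quad\text{and}\quad \alpha\cdot g(\alpha)\cdots g^{n_\alpha-1}(\alpha)\cdot\alpha=0\quad\text{in }\Lambda.$$
   Context: Setting: $Q$ is a finite quiver with vertex set $Q_0$ and arrow set $Q_1$, connected, without loops or $2$-cycles, every vertex being the source of exactly two arrows and the target of exactly two arrows, equipped with bijections $f,g:Q_1\to Q_1$ such that for each $\alpha$, $\{f(\alpha),g(\alpha)\}$ is the set of the two arrows starting at the target of $\alpha$, and $f^3=\mathrm{id}$. $n_\alpha$ is the size of the $g$-orbit of $\alpha$. $c:Q_1\to K^\times$ is constant on $g$-orbits. Paths compose left to right ($\alpha\cdot\beta$ is $\alpha$ followed by $\beta$). $W=\sum_\alpha \alpha\cdot f(\alpha)\cdot f^2(\alpha)-\sum_\beta c_\beta\,\beta\cdot g(\beta)\cdots g^{n_\beta-1}(\beta)$ (sums over representatives of $f$-orbits, resp. $g$-orbits). $\Lambda=\widehat{KQ}/\overline{(\partial_\alpha W:\alpha\in Q_1)}$ is the completed Jacobian algebra. $(\star)$: for every $\alpha$, $n_\alpha\ge4$ or $n_{f(\alpha)}\ge4$. $(\diamond)$: $n_\alpha=3$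 for all $\alpha$. *)

theory Defs
  imports Main
begin

text \<open>Paths in a quiver (Q0,Q1,s,t) are pairs (v, p): a starting vertex v and a list of
 arrows p, composed left to right. (v, []) is the trivial path e_v.
 Elements of the completed path algebra are functions from paths to K supported on
 valid paths (arbitrary, possibly infinite, formal linear combinations).\<close>

definition endpt :: "('a \<Rightarrow> 'v) \<Rightarrow> 'v \<Rightarrow> 'a list \<Rightarrow> 'v" where
  "endpt t v p = (if p = [] then v else t (last p))"

fun composable :: "('a \<Rightarrow> 'v) \<Rightarrow> ('a \<Rightarrow> 'v) \<Rightarrow> 'v \<Rightarrow> 'a list \<Rightarrow> bool" where
  "composable s t v [] = True"
| "composable s t v (a # p) = (s a = v \<and> composable s t (t a) p)"

definition valid_path :: "'v set \<Rightarrow> 'a set \<Rightarrow> ('a \<Rightarrow> 'v) \<Rightarrow> ('a \<Rightarrow> 'v) \<Rightarrow> 'v \<times> 'a list \<Rightarrow> bool" where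
  "valid_path Q0 Q1 s t q = (fst q \<in> Q0 \<and> set (snd q) \<subseteq> Q1 \<and> composable s t (fst q) (snd q))"

definition compl_alg :: "'v set \<Rightarrow> 'a set \<Rightarrow> ('a \<Rightarrow> 'v) \<Rightarrow> ('a \<Rightarrow> 'v) \<Rightarrow> ('v \<times> 'a list \<Rightarrow> 'k::field) set" where
  "compl_alg Q0 Q1 s t = {x. \<forall>q. \<not> valid_path Q0 Q1 s t q \<longrightarrow> x q = 0}"

definition pmul :: "('a \<Rightarrow> 'v) \<Rightarrow> ('v \<times> 'a list \<Rightarrow> 'k::field) \<Rightarrow> ('v \<times> 'a list \<Rightarrow> 'k) \<Rightarrow> ('v \<times> 'a list \<Rightarrow> 'k)" where
  "pmul t x y = (\<lambda>q. \<Sum>k\<in>{0..length (snd q)}.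
      x (fst q, take k (snd q)) * y (endpt t (fst q) (take k (snd q)), drop k (snd q)))"

definition mon :: "'v \<times> 'a list \<Rightarrow> ('v \<times> 'a list \<Rightarrow> 'k::field)" where
  "mon q = (\<lambda>q'. if q' = q then 1 else 0)"

inductive_set gen_ideal :: "'v set \<Rightarrow> 'a set \<Rightarrow> ('a \<Rightarrow> 'v) \<Rightarrow> ('a \<Rightarrow> 'v)
    \<Rightarrow> ('v \<times> 'a list \<Rightarrow> 'k::field) set \<Rightarrow> ('v \<times> 'a list \<Rightarrow> 'k) set"
  for Q0 Q1 s t R where
  zero: "(\<lambda>_. 0) \<in> gen_ideal Q0 Q1 s t R"
| gen: "r \<in> R \<Longrightarrow> a \<in> compl_alg Q0 Q1 s t \<Longrightarrow> b \<in> compl_alg Q0 Q1 s t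
        \<Longrightarrow> pmul t (pmul t a r) b \<in> gen_ideal Q0 Q1 s t R"
| add: "x \<in> gen_ideal Q0 Q1 s t R \<Longrightarrow> y \<in> gen_ideal Q0 Q1 s t R
        \<Longrightarrow> (\<lambda>q. x q + y q) \<in> gen_ideal Q0 Q1 s t R"

text \<open>Closure in the arrow-ideal-adic topology: x is in the closure of I iff for every N
 there is y in I agreeing with x on all paths of length < N (i.e. x - y in m^N).\<close>
definition madic_closure :: "('v \<times> 'a list \<Rightarrow> 'k::field) set \<Rightarrow> ('v \<times> 'a list \<Rightarrow> 'k) set" where
  "madic_closure I = {x. \<forall>N. \<exists>y\<in>I. \<forall>q. length (snd q) < N \<longrightarrow> x q = y q}"

text \<open>Cyclic derivative with respect to an arrow alpha of a potential x (a combination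
 of cycles): the coefficient of q in the derivative is the sum of the coefficients of
 all cyclic rotations of the cycle alpha q.\<close>
definition cder :: "'v set \<Rightarrow> 'a set \<Rightarrow> ('a \<Rightarrow> 'v) \<Rightarrow> ('a \<Rightarrow> 'v) \<Rightarrow> 'a
    \<Rightarrow> ('v \<times> 'a list \<Rightarrow> 'k::field) \<Rightarrow> ('v \<times> 'a list \<Rightarrow> 'k)" where
  "cder Q0 Q1 s t \<alpha> x = (\<lambda>q.
     if fst q = t \<alpha> \<and> valid_path Q0 Q1 s t (s \<alpha>, \<alpha> # snd q)
        \<and> endpt t (s \<alpha>) (\<alpha> # snd q) = s \<alpha>
     then (\<Sum>j<Suc (length (snd q)). x (s (hd (rotate j (\<alpha> # snd q))), rotate j (\<alpha> # snd q)))
     else 0)"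

definition orbit :: "('a \<Rightarrow> 'a) \<Rightarrow> 'a \<Rightarrow> 'a set" where
  "orbit h \<alpha> = range (\<lambda>k. (h ^^ k) \<alpha>)"

definition orbsize :: "('a \<Rightarrow> 'a) \<Rightarrow> 'a \<Rightarrow> nat" where
  "orbsize h \<alpha> = card (orbit h \<alpha>)"

definition is_orbit_reps :: "('a \<Rightarrow> 'a) \<Rightarrow> 'a set \<Rightarrow> 'a set \<Rightarrow> bool" where
  "is_orbit_reps h Q1 \<Omega> = (\<Omega> \<subseteq> Q1 \<and> (\<forall>\<alpha>\<in>Q1. \<exists>!\<omega>. \<omega> \<in> \<Omega> \<and> \<omega> \<in> orbit h \<alpha>))"

definition gcycle :: "('a \<Rightarrow> 'a) \<Rightarrow> 'a \<Rightarrow> 'a list" where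
  "gcycle g \<alpha> = map (\<lambda>k. (g ^^ k) \<alpha>) [0..<orbsize g \<alpha>]"

definition potential :: "('a \<Rightarrow> 'v) \<Rightarrow> ('a \<Rightarrow> 'a) \<Rightarrow> ('a \<Rightarrow> 'a) \<Rightarrow> ('a \<Rightarrow> 'k::field)
    \<Rightarrow> 'a set \<Rightarrow> 'a set \<Rightarrow> ('v \<times> 'a list \<Rightarrow> 'k)" where
  "potential s f g c \<Omega>f \<Omega>g = (\<lambda>q.
      (\<Sum>\<omega>\<in>\<Omega>f. mon (s \<omega>, [\<omega>, f \<omega>, f (f \<omega>)]) q)
    - (\<Sum>\<omega>\<in>\<Omega>g. c \<omega> * mon (s \<omega>, gcycle g \<omega>) q))"

text \<open>Kernel of the projection onto the completed Jacobian algebra: the closure of the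
 ideal generated by all cyclic derivatives of W.\<close>
definition jac_kernel :: "'v set \<Rightarrow> 'a set \<Rightarrow> ('a \<Rightarrow> 'v) \<Rightarrow> ('a \<Rightarrow> 'v)
    \<Rightarrow> ('v \<times> 'a list \<Rightarrow> 'k::field) \<Rightarrow> ('v \<times> 'a list \<Rightarrow> 'k) set" where
  "jac_kernel Q0 Q1 s t W = madic_closure (gen_ideal Q0 Q1 s t {cder Q0 Q1 s t \<alpha> W | \<alpha>. \<alpha> \<in> Q1})"

end

theory Submission
  imports Defs
begin

text \<open>In \<open>\<Lambda>\<close> the derivative \<open>\<partial>\<^sub>\<beta>W\<close> identifies \<open>f(\<beta>) f\<^sup>2(\<beta>)\<close> with
  \<open>c\<^sub>\<beta> g(\<beta>) \<cdots> g\<^bsup>n\<^sub>\<beta>-1\<^esup>(\<beta>)\<close>. One such relation turns \<open>\<alpha> f(\<alpha>) f\<^sup>2(\<alpha>) \<alpha>\<close> into a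
  multiple of the other path of the statement, and another turns it into a multiple of a path
  starting with \<open>\<alpha> f(\<alpha>) g(f(\<alpha>))\<close>. So it suffices to show that every path through a pattern
  \<open>x f(x) g(f(x))\<close> lies in the closure of the Jacobian ideal. Two relations move the pattern
  further along the path, at the cost of the factor \<open>c\<^sub>\<gamma> c\<^sub>\<epsilon>\<close> for two arrows \<open>\<gamma>, \<epsilon>\<close>.
  Under \<open>(\<star>)\<close> every move makes the path strictly longer, so the path is congruent to multiples
  of arbitrarily long paths and lies in the closure. Under \<open>(\<diamond>)\<close> the quiver is the
  tetrahedron: two moves return to the original path, and the factor collected is the product of
  \<open>c\<close> over the four \<open>g\<close>-orbits, which is \<open>\<noteq> 1\<close>; so the path even lies in the ideal.\<close>

section \<open>Orbits of a bijection of a finite set\<close>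

lemma funpow_returns:
  assumes h: "bij_betw h S S" and S: "finite S" and y: "y \<in> S"
  shows "\<exists>m>0. (h ^^ m) y = y"
proof -
  have "range (\<lambda>k. (h ^^ k) y) \<subseteq> S"
    using bij_betw_funpow[OF h] y by (auto simp: bij_betw_def)
  then have "\<not> inj (\<lambda>k. (h ^^ k) y)"
    using S finite_subset infinite_UNIV_nat finite_imageD by blast
  then obtain i j where ij: "i < j" "(h ^^ i) y = (h ^^ j) y"
    unfolding inj_def by (metis linorder_neqE_nat)
  have "(h ^^ i) ((h ^^ (j - i)) y) = (h ^^ (i + (j - i))) y"
    by (simp add: funpow_add)
  then have "(h ^^ i) ((h ^^ (j - i)) y) = (h ^^ i) y"
    using ij by simp
  moreover have "inj_on (h ^^ i) S" "(h ^^ (j - i)) y \<in> S"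
    using bij_betw_funpow[OF h] y by (auto simp: bij_betw_def)
  ultimately have "(h ^^ (j - i)) y = y"
    using y by (auto dest: inj_onD)
  then show ?thesis using ij(1) by (intro exI[of _ "j - i"]) auto
qed

lemma orbit_funpow_least:
  assumes "bij_betw h S S" "finite S" "y \<in> S"
  obtains p where "0 < p" "(h ^^ p) y = y" "inj_on (\<lambda>k. (h ^^ k) y) {..<p}"
    "orbit h y = (\<lambda>k. (h ^^ k) y) ` {..<p}"
proof -
  define p where "p = (LEAST m. 0 < m \<and> (h ^^ m) y = y)"
  have ex: "\<exists>m. 0 < m \<and> (h ^^ m) y = y" using funpow_returns[OF assms] by blast
  have p: "0 < p" "(h ^^ p) y = y" using LeastI_ex[OF ex] unfolding p_def by auto
  have "inj_on (\<lambda>k. (h ^^ k) y) {0..<p}"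
    by (rule inj_on_funpow_least[OF p(2)]) (use not_less_Least in \<open>auto simp: p_def\<close>)
  moreover have "orbit h y = (\<lambda>k. (h ^^ k) y) ` {..<p}"
    unfolding orbit_def using p(1) funpow_mod_eq[OF p(2)]
    by (auto intro!: image_eqI[where x="_ mod p"])
  ultimately show ?thesis using that p by (simp add: atLeast0LessThan)
qed

context
  fixes h :: "'a \<Rightarrow> 'a" and S :: "'a set" and y :: 'a
  assumes h: "bij_betw h S S" and S: "finite S" and y: "y \<in> S"
begin

lemma orbsize_pos: "0 < orbsize h y"
  and funpow_orbsize: "(h ^^ orbsize h y) y = y"
  and inj_on_funpow_orbsize: "inj_on (\<lambda>k. (h ^^ k) y) {..<orbsize h y}"
  and orbit_eq_funpow_image: "orbit h y = (\<lambda>k. (h ^^ k) y) ` {..<orbsize h y}"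
proof -
  obtain p where "0 < p" "(h ^^ p) y = y" "inj_on (\<lambda>k. (h ^^ k) y) {..<p}"
    "orbit h y = (\<lambda>k. (h ^^ k) y) ` {..<p}"
    using orbit_funpow_least[OF h S y] .
  moreover from this have "orbsize h y = p" by (simp add: orbsize_def card_image)
  ultimately show "0 < orbsize h y" "(h ^^ orbsize h y) y = y"
    "inj_on (\<lambda>k. (h ^^ k) y) {..<orbsize h y}" "orbit h y = (\<lambda>k. (h ^^ k) y) ` {..<orbsize h y}"
    by simp_all
qed

lemma orbit_apply: "orbit h (h y) = orbit h y"
proof
  have shift: "(h ^^ k) (h y) = (h ^^ Suc k) y" for k
    by (simp add: funpow_Suc_right del: funpow.simps)
  then show "orbit h (h y) \<subseteq> orbit h y"
    unfolding orbit_def by (metis image_subsetI rangeI)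
  have pred: "(h ^^ (orbsize h y - 1)) (h y) = y"
    using shift[of "orbsize h y - 1"] orbsize_pos funpow_orbsize by (simp del: funpow.simps)
  show "orbit h y \<subseteq> orbit h (h y)"
  proof
    fix z assume "z \<in> orbit h y"
    then obtain k where "z = (h ^^ k) ((h ^^ (orbsize h y - 1)) (h y))"
      unfolding orbit_def pred by auto
    then show "z \<in> orbit h (h y)" unfolding orbit_def by (metis comp_apply funpow_add rangeI)
  qed
qed

end

lemma orbit_funpow:
  assumes "bij_betw h S S" "finite S" "y \<in> S"
  shows "orbit h ((h ^^ k) y) = orbit h y"
proof (induction k)
  case (Suc k)
  have "(h ^^ k) y \<in> S" using bij_betw_funpow[OF assms(1)] assms(3) by (auto simp: bij_betw_def)
  then show ?case using orbit_apply[OF assms(1,2)] Suc by simp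
qed simp

lemma orbit_eq_if_mem:
  assumes "bij_betw h S S" "finite S" "y \<in> S" "z \<in> orbit h y"
  shows "orbit h z = orbit h y"
proof -
  obtain k where "z = (h ^^ k) y" using assms(4) unfolding orbit_def by blast
  then show ?thesis using orbit_funpow[OF assms(1-3)] by simp
qed

lemma orbsize_funpow:
  assumes "bij_betw h S S" "finite S" "y \<in> S"
  shows "orbsize h ((h ^^ k) y) = orbsize h y"
  unfolding orbsize_def orbit_funpow[OF assms] ..

lemma sum_funpow_orbit_reps:
  fixes F :: "'a \<Rightarrow> 'b::comm_monoid_add"
  assumes h: "bij_betw h S S" and S: "finite S" and y: "y \<in> S"
    and \<Omega>: "is_orbit_reps h S \<Omega>" and F: "\<And>k. F ((h ^^ k) y) = F y"
  shows "(\<Sum>j<orbsize h y. if (h ^^ j) y \<in> \<Omega> then F ((h ^^ j) y) else 0) = F y"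
proof -
  have "\<exists>!\<omega>. \<omega> \<in> \<Omega> \<and> \<omega> \<in> orbit h y"
    using \<Omega> y by (simp add: is_orbit_reps_def)
  then obtain \<omega> where \<omega>: "orbit h y \<inter> \<Omega> = {\<omega>}"
    by (elim ex1E) blast
  have "(\<Sum>j<orbsize h y. if (h ^^ j) y \<in> \<Omega> then F ((h ^^ j) y) else 0)
      = (\<Sum>z\<in>orbit h y. if z \<in> \<Omega> then F z else 0)"
    unfolding orbit_eq_funpow_image[OF h S y]
    by (rule sum.reindex[OF inj_on_funpow_orbsize[OF h S y], symmetric, unfolded comp_def])
  also have "\<dots> = (\<Sum>z\<in>orbit h y \<inter> \<Omega>. F z)"
    by (simp add: sum.inter_restrict orbit_eq_funpow_image[OF h S y])
  also have "\<dots> = F \<omega>"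
    using \<omega> by simp
  also have "F \<omega> = F y"
  proof -
    obtain k where "\<omega> = (h ^^ k) y" using \<omega> unfolding orbit_def by blast
    then show ?thesis using F by simp
  qed
  finally show ?thesis .
qed

section \<open>Monomials in the completed path algebra\<close>

lemma endpt_Nil [simp]: "endpt t v [] = v"
  by (simp add: endpt_def)

lemma endpt_Cons [simp]: "endpt t v (a # p) = endpt t (t a) p"
  by (simp add: endpt_def)

lemma endpt_append: "endpt t v (p @ q) = endpt t (endpt t v p) q"
  by (induction p arbitrary: v) auto

lemma composable_append:
  "composable s t v (p @ q) \<longleftrightarrow> composable s t v p \<and> composable s t (endpt t v p) q"
  by (induction p arbitrary: v) auto

lemma sum_eq_single:
  fixes F :: "'b \<Rightarrow> 'k::comm_monoid_add"
  assumes "\<And>k. k \<in> A \<Longrightarrow> k \<noteq> k0 \<Longrightarrow> F k = 0" "finite A"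
  shows "sum F A = (if k0 \<in> A then F k0 else 0)"
proof -
  have "sum F A = (\<Sum>k\<in>A. if k = k0 then F k else 0)"
    using assms(1) by (intro sum.cong) auto
  then show ?thesis using assms(2) by (simp add: sum.delta')
qed

lemma pmul_mon_left:
  "pmul t (mon (v, p)) x (u, l) =
     (if u = v \<and> length p \<le> length l \<and> take (length p) l = p
      then x (endpt t v p, drop (length p) l) else (0::'k::field))"
proof -
  have "pmul t (mon (v, p)) x (u, l) = (\<Sum>k\<in>{0..length l}.
      (if (u, take k l) = (v, p) then 1 else 0) * x (endpt t u (take k l), drop k l))"
    by (simp add: pmul_def mon_def)
  also have "\<dots> = (if length p \<in> {0..length l} then
      (if (u, take (length p) l) = (v, p) then 1 else 0)
        * x (endpt t u (take (length p) l), drop (length p) l) else 0)"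
    by (rule sum_eq_single) auto
  finally show ?thesis by auto
qed

lemma pmul_mon_right:
  "pmul t x (mon (w, q)) (u, l) =
     (if length q \<le> length l \<and> drop (length l - length q) l = q
         \<and> endpt t u (take (length l - length q) l) = w
      then x (u, take (length l - length q) l) else (0::'k::field))"
proof -
  have "pmul t x (mon (w, q)) (u, l) = (\<Sum>k\<in>{0..length l}.
      x (u, take k l) * (if (endpt t u (take k l), drop k l) = (w, q) then 1 else 0))"
    by (simp add: pmul_def mon_def)
  also have "\<dots> = (if length l - length q \<in> {0..length l} then
      x (u, take (length l - length q) l) * (if (endpt t u (take (length l - length q) l),
         drop (length l - length q) l) = (w, q) then 1 else 0) else 0)"
    by (rule sum_eq_single) auto
  finally show ?thesis by auto
qed

lemma pmul_scale_left: "pmul t (\<lambda>q. k * x q) y = (\<lambda>q. k * pmul t x y q)"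
  by (simp add: pmul_def sum_distrib_left mult.assoc)

lemma gen_ideal_scale:
  assumes "x \<in> gen_ideal Q0 Q1 s t R"
  shows "(\<lambda>q. k * x q) \<in> gen_ideal Q0 Q1 s t R"
  using assms
proof induction
  case zero
  then show ?case by (simp add: gen_ideal.zero)
next
  case (gen r a b)
  have "(\<lambda>q. k * a q) \<in> compl_alg Q0 Q1 s t"
    using gen(2) by (simp add: compl_alg_def)
  moreover have "pmul t (pmul t (\<lambda>q. k * a q) r) b = (\<lambda>q. k * pmul t (pmul t a r) b q)"
    by (simp add: pmul_scale_left)
  ultimately show ?case
    using gen by (metis gen_ideal.gen)
next
  case (add x y)
  then show ?case
    using gen_ideal.add[OF add.IH] by (simp add: distrib_left)
qed

lemma mon_in_compl_alg: "valid_path Q0 Q1 s t q \<Longrightarrow> mon q \<in> compl_alg Q0 Q1 s t"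
  by (auto simp: compl_alg_def mon_def)

section \<open>Triangulation quivers\<close>

locale triangulation_quiver =
  fixes Q0 :: "'v set" and Q1 :: "'a set" and s t :: "'a \<Rightarrow> 'v"
    and f g :: "'a \<Rightarrow> 'a" and c :: "'a \<Rightarrow> 'k::field"
    and \<Omega>f \<Omega>g :: "'a set"
  assumes fin1: "finite Q1"
    and st: "\<forall>a\<in>Q1. s a \<in> Q0 \<and> t a \<in> Q0"
    and conn: "\<forall>u\<in>Q0. \<forall>v\<in>Q0. (u, v) \<in> ({(s a, t a) | a. a \<in> Q1} \<union> {(t a, s a) | a. a \<in> Q1})\<^sup>*"
    and noloop: "\<forall>a\<in>Q1. s a \<noteq> t a"
    and no2cyc: "\<forall>a\<in>Q1. \<forall>b\<in>Q1. \<not> (s a = t b \<and> t a = s b)"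
    and out2: "\<forall>v\<in>Q0. card {a\<in>Q1. s a = v} = 2"
    and in2: "\<forall>v\<in>Q0. card {a\<in>Q1. t a = v} = 2"
    and fbij: "bij_betw f Q1 Q1" and gbij: "bij_betw g Q1 Q1"
    and fg: "\<forall>\<alpha>\<in>Q1. {f \<alpha>, g \<alpha>} = {\<beta>\<in>Q1. s \<beta> = t \<alpha>}"
    and f3: "\<forall>\<alpha>\<in>Q1. f (f (f \<alpha>)) = \<alpha>"
    and cnz: "\<forall>\<alpha>\<in>Q1. c \<alpha> \<noteq> 0"
    and cconst: "\<forall>\<alpha>\<in>Q1. c (g \<alpha>) = c \<alpha>"
    and repf: "is_orbit_reps f Q1 \<Omega>f"
    and repg: "is_orbit_reps g Q1 \<Omega>g"
begin

lemma f_in_Q1 [simp]: "a \<in> Q1 \<Longrightarrow> f a \<in> Q1"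
  using fbij by (auto simp: bij_betw_def)

lemma g_in_Q1 [simp]: "a \<in> Q1 \<Longrightarrow> g a \<in> Q1"
  using gbij by (auto simp: bij_betw_def)

lemma funpow_f_in_Q1 [simp]: "a \<in> Q1 \<Longrightarrow> (f ^^ k) a \<in> Q1"
  by (induction k) auto

lemma funpow_g_in_Q1 [simp]: "a \<in> Q1 \<Longrightarrow> (g ^^ k) a \<in> Q1"
  by (induction k) auto

lemma s_in_Q0 [simp]: "a \<in> Q1 \<Longrightarrow> s a \<in> Q0"
  using st by auto

lemma t_in_Q0 [simp]: "a \<in> Q1 \<Longrightarrow> t a \<in> Q0"
  using st by auto

lemma s_f [simp]: "a \<in> Q1 \<Longrightarrow> s (f a) = t a"
  using fg by blast

lemma s_g [simp]: "a \<in> Q1 \<Longrightarrow> s (g a) = t a"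
  using fg by blast

lemma f_f_f [simp]: "a \<in> Q1 \<Longrightarrow> f (f (f a)) = a"
  using f3 by blast

lemma t_f_f [simp]: "a \<in> Q1 \<Longrightarrow> t (f (f a)) = s a"
  by (metis f_in_Q1 f_f_f s_f)

lemma arrows_from_target: "a \<in> Q1 \<Longrightarrow> {b\<in>Q1. s b = t a} = {f a, g a}"
  using fg by auto

lemma f_neq_g: assumes "a \<in> Q1" shows "f a \<noteq> g a"
proof
  assume "f a = g a"
  then have "{b\<in>Q1. s b = t a} = {f a}"
    using arrows_from_target[OF assms] by simp
  then have "card {b\<in>Q1. s b = t a} = 1" by simp
  then show False using out2 assms by simp
qed

lemma f_eq_g_if_same_target:
  assumes a: "a \<in> Q1" and b: "b \<in> Q1" and "t a = t b" "a \<noteq> b"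
  shows "f a = g b"
proof -
  have "f a \<in> {f b, g b}" using arrows_from_target[OF a] arrows_from_target[OF b] assms by auto
  moreover have "f a \<noteq> f b" using fbij a b \<open>a \<noteq> b\<close> by (auto simp: bij_betw_def inj_on_def)
  ultimately show ?thesis by auto
qed

lemma f_f_g_neq: assumes "a \<in> Q1" shows "f (f (g a)) \<noteq> a"
proof
  assume "f (f (g a)) = a"
  then have "f a = g a" using assms by (metis f_f_f g_in_Q1)
  then show False using f_neq_g[OF assms] by simp
qed

lemma arrows_to_target: assumes "a \<in> Q1" shows "{b\<in>Q1. t b = t a} = {a, f (f (g a))}"
proof -
  have sub: "{a, f (f (g a))} \<subseteq> {b\<in>Q1. t b = t a}" using assms by auto
  have "card {a, f (f (g a))} = card {b\<in>Q1. t b = t a}"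
    using f_f_g_neq[OF assms] in2 assms by simp
  then show ?thesis using card_subset_eq[OF _ sub] fin1 by simp
qed

lemma g_f_f_g: assumes "a \<in> Q1" shows "g (f (f (g a))) = f a"
  using f_eq_g_if_same_target[of a "f (f (g a))"] f_f_g_neq[OF assms] assms by simp

lemma closed_subset_eq_Q1:
  assumes U: "U \<subseteq> Q1" "x0 \<in> U"
    and closed: "\<And>y. y \<in> U \<Longrightarrow> f y \<in> U" "\<And>y. y \<in> U \<Longrightarrow> g y \<in> U"
  shows "U = Q1"
proof -
  have in_U_if_target: "a \<in> U" if a: "a \<in> Q1" and ta: "t a \<in> t ` U" for a
  proof -
    obtain y where y: "y \<in> U" "t a = t y" using ta by auto
    then have "a \<in> {y, f (f (g y))}" using arrows_to_target[of y] U a by auto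
    then show ?thesis using y closed by auto
  qed
  have in_U_if_source: "a \<in> U" if a: "a \<in> Q1" and sa: "s a \<in> t ` U" for a
  proof -
    obtain y where y: "y \<in> U" "s a = t y" using sa by auto
    then have "a \<in> {f y, g y}" using arrows_from_target[of y] U a by auto
    then show ?thesis using y closed by auto
  qed
  have source_in: "s a \<in> t ` U" if a: "a \<in> U" for a
  proof -
    have "t (f (f a)) = s a" using a U by auto
    then show ?thesis using closed(1)[OF closed(1)[OF a]] by (metis image_eqI)
  qed
  have "v \<in> t ` U" if "(t x0, v) \<in> ({(s a, t a) | a. a \<in> Q1} \<union> {(t a, s a) | a. a \<in> Q1})\<^sup>*" for v
    using that
  proof induction
    case base
    then show ?case using U by simp
  next
    case (step v v')
    then obtain a where a: "a \<in> Q1" and "v = s a \<and> v' = t a \<or> v = t a \<and> v' = s a" by blast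
    then consider "v = s a" "v' = t a" | "v = t a" "v' = s a" by blast
    then show ?case
    proof cases
      case 1
      then show ?thesis using in_U_if_source[OF a] step.IH by simp
    next
      case 2
      then show ?thesis using in_U_if_target[OF a] step.IH source_in by simp
    qed
  qed
  moreover have "t x0 \<in> Q0" using U by auto
  ultimately have "t a \<in> t ` U" if "a \<in> Q1" for a
    using conn that by simp
  then show ?thesis using U in_U_if_target by blast
qed

lemma f_distinct: assumes a: "a \<in> Q1" shows "f a \<noteq> a" "f (f a) \<noteq> a" "f (f a) \<noteq> f a"
  using noloop a by (metis s_f t_f_f f_in_Q1)+

abbreviation gsize :: "'a \<Rightarrow> nat" where "gsize a \<equiv> orbsize g a"

lemma funpow_gsize: "a \<in> Q1 \<Longrightarrow> (g ^^ gsize a) a = a"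
  using funpow_orbsize[OF gbij fin1] .

lemma gsize_funpow_g: "a \<in> Q1 \<Longrightarrow> gsize ((g ^^ k) a) = gsize a"
  using orbsize_funpow[OF gbij fin1] .

lemma gsize_g: "a \<in> Q1 \<Longrightarrow> gsize (g a) = gsize a"
  using gsize_funpow_g[of a 1] by simp

lemma funpow_gsize_pred: assumes "a \<in> Q1" shows "(g ^^ (gsize a - 1)) (g a) = a"
  using funpow_gsize[OF assms] orbsize_pos[OF gbij fin1 assms]
  by (metis Suc_diff_1 comp_apply funpow_Suc_right)

lemma c_funpow_g: "a \<in> Q1 \<Longrightarrow> c ((g ^^ k) a) = c a"
  by (induction k) (auto simp: cconst)

lemma gsize_ge_3: assumes a: "a \<in> Q1" shows "3 \<le> gsize a"
proof -
  have "gsize a \<noteq> 1"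
  proof
    assume "gsize a = 1"
    then have "g a = a" using funpow_gsize[OF a] by simp
    then show False using noloop s_g[OF a] a by force
  qed
  moreover have "gsize a \<noteq> 2"
  proof
    assume "gsize a = 2"
    then have "g (g a) = a" using funpow_gsize[OF a] by (simp add: numeral_2_eq_2)
    then show False using no2cyc a by (metis g_in_Q1 s_g)
  qed
  ultimately show ?thesis using orbsize_pos[OF gbij fin1 a] by linarith
qed

lemma f_orbit: assumes a: "a \<in> Q1" shows "orbit f a = {a, f a, f (f a)}"
proof
  have period: "(f ^^ 3) a = a" using a by (simp add: numeral_3_eq_3)
  have "(f ^^ k) a \<in> {a, f a, f (f a)}" for k
  proof -
    consider "k mod 3 = 0" | "k mod 3 = 1" | "k mod 3 = 2" by linarith
    then show ?thesis
      using funpow_mod_eq[OF period, of k] by cases (simp_all add: numeral_2_eq_2)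
  qed
  then show "orbit f a \<subseteq> {a, f a, f (f a)}"
    unfolding orbit_def by blast
  have "a = (f ^^ 0) a" "f a = (f ^^ 1) a" "f (f a) = (f ^^ 2) a"
    by (simp_all add: numeral_2_eq_2)
  then show "{a, f a, f (f a)} \<subseteq> orbit f a"
    unfolding orbit_def by (metis empty_subsetI insert_subset rangeI)
qed

lemma orbsize_f: "a \<in> Q1 \<Longrightarrow> orbsize f a = 3"
  using f_distinct[of a] by (simp add: orbsize_def f_orbit)

lemma \<Omega>f_subset: "\<Omega>f \<subseteq> Q1"
  using repf by (simp add: is_orbit_reps_def)

lemma \<Omega>g_subset: "\<Omega>g \<subseteq> Q1"
  using repg by (simp add: is_orbit_reps_def)

lemma finite_\<Omega>f: "finite \<Omega>f"
  using \<Omega>f_subset fin1 finite_subset by blast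

lemma finite_\<Omega>g: "finite \<Omega>g"
  using \<Omega>g_subset fin1 finite_subset by blast

lemma prod_c_\<Omega>g:
  assumes rs: "set rs \<subseteq> Q1" and cover: "Q1 \<subseteq> (\<Union>r\<in>set rs. orbit g r)"
    and distinct: "distinct (map (orbit g) rs)"
  shows "(\<Prod>\<alpha>\<in>\<Omega>g. c \<alpha>) = (\<Prod>r\<leftarrow>rs. c r)"
proof -
  define rep where "rep r = (THE \<omega>. \<omega> \<in> \<Omega>g \<and> \<omega> \<in> orbit g r)" for r
  have rep: "rep r \<in> \<Omega>g" "rep r \<in> orbit g r" if "r \<in> Q1" for r
    using theI'[of "\<lambda>\<omega>. \<omega> \<in> \<Omega>g \<and> \<omega> \<in> orbit g r"] repg that
    unfolding rep_def is_orbit_reps_def by auto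
  have orbit_rep: "orbit g (rep r) = orbit g r" if "r \<in> Q1" for r
    using orbit_eq_if_mem[OF gbij fin1 that rep(2)[OF that]] .
  have inj: "inj_on (orbit g) (set rs)" and "distinct rs"
    using distinct by (simp_all add: distinct_map)
  have "bij_betw rep (set rs) \<Omega>g"
  proof (rule bij_betw_imageI)
    show "inj_on rep (set rs)"
    proof (rule inj_onI)
      fix r r' assume "r \<in> set rs" "r' \<in> set rs" "rep r = rep r'"
      then show "r = r'" using orbit_rep rs inj by (metis inj_onD subsetD)
    qed
    show "rep ` set rs = \<Omega>g"
    proof
      show "rep ` set rs \<subseteq> \<Omega>g" using rep rs by auto
      show "\<Omega>g \<subseteq> rep ` set rs"
      proof
        fix \<omega> assume \<omega>: "\<omega> \<in> \<Omega>g"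
        then obtain r where r: "r \<in> set rs" "\<omega> \<in> orbit g r" using cover \<Omega>g_subset by blast
        then have "rep r = \<omega>"
          using repg rep[of r] rs \<omega> unfolding is_orbit_reps_def by blast
        then show "\<omega> \<in> rep ` set rs" using r by blast
      qed
    qed
  qed
  then have "(\<Prod>\<alpha>\<in>\<Omega>g. c \<alpha>) = (\<Prod>r\<in>set rs. c (rep r))"
    by (simp add: prod.reindex_bij_betw)
  also have "\<dots> = (\<Prod>r\<in>set rs. c r)"
  proof (rule prod.cong)
    fix r assume "r \<in> set rs"
    then have r: "r \<in> Q1" using rs by blast
    then obtain k where "rep r = (g ^^ k) r" using rep(2) unfolding orbit_def by blast
    then show "c (rep r) = c r" using c_funpow_g r by simp
  qed simp
  also have "\<dots> = (\<Prod>r\<leftarrow>rs. c r)"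
    using \<open>distinct rs\<close> by (simp add: prod.distinct_set_conv_list)
  finally show ?thesis .
qed

section \<open>The Jacobian relations\<close>

definition fcycle :: "'a \<Rightarrow> 'a list" where
  "fcycle a = [a, f a, f (f a)]"

definition gpath :: "'a \<Rightarrow> nat \<Rightarrow> 'a list" where
  "gpath a m = map (\<lambda>k. (g ^^ k) a) [0..<m]"

definition ftail :: "'a \<Rightarrow> 'a list" where
  "ftail a = [f a, f (f a)]"

definition gtail :: "'a \<Rightarrow> 'a list" where
  "gtail a = gpath (g a) (gsize a - 1)"

lemma gpath_Suc: "gpath a (Suc m) = a # gpath (g a) m"
  unfolding gpath_def by (simp add: map_upt_Suc funpow_swap1 del: upt_Suc)

lemma gpath_snoc: "gpath a (Suc m) = gpath a m @ [(g ^^ m) a]"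
  unfolding gpath_def by simp

lemma length_gpath [simp]: "length (gpath a m) = m"
  unfolding gpath_def by simp

lemma gpath_valid:
  "a \<in> Q1 \<Longrightarrow> composable s t (s a) (gpath a m) \<and> endpt t (s a) (gpath a m) = s ((g ^^ m) a)
     \<and> set (gpath a m) \<subseteq> Q1"
proof (induction m arbitrary: a)
  case (Suc m)
  then show ?case
    using Suc.IH[of "g a"] by (simp add: gpath_Suc funpow_Suc_right del: funpow.simps)
qed (simp add: gpath_def)

lemma gcycle_eq_gpath: "gcycle g a = gpath a (gsize a)"
  unfolding gcycle_def gpath_def ..

lemma gcycle_eq_Cons_gtail: assumes "a \<in> Q1" shows "gcycle g a = a # gtail a"
  using gsize_ge_3[OF assms] gpath_Suc[of a "gsize a - 1"]
  by (simp add: gcycle_eq_gpath gtail_def)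

lemma gtail_eq_Cons: assumes "a \<in> Q1" shows "gtail a = g a # gpath (g (g a)) (gsize a - 2)"
  using gsize_ge_3[OF assms] gpath_Suc[of "g a" "gsize a - 2"]
  by (simp add: gtail_def numeral_2_eq_2 Suc_diff_Suc)

lemma gtail_valid:
  assumes a: "a \<in> Q1"
  shows "composable s t (t a) (gtail a) \<and> endpt t (t a) (gtail a) = s a \<and> set (gtail a) \<subseteq> Q1"
  using gpath_valid[of "g a" "gsize a - 1"] funpow_gsize_pred[OF a] a by (simp add: gtail_def)

lemma ftail_valid:
  "a \<in> Q1 \<Longrightarrow> composable s t (t a) (ftail a) \<and> endpt t (t a) (ftail a) = s a \<and> set (ftail a) \<subseteq> Q1"
  by (simp add: ftail_def)

lemma ftail_neq_gtail: "a \<in> Q1 \<Longrightarrow> ftail a \<noteq> gtail a"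
  using f_neq_g by (simp add: ftail_def gtail_eq_Cons)

lemma rotate_gcycle: assumes "a \<in> Q1" shows "rotate k (gcycle g a) = gcycle g ((g ^^ k) a)"
  using assms
proof (induction k)
  case (Suc k)
  have "rotate1 (gcycle g b) = gcycle g (g b)" if b: "b \<in> Q1" for b
  proof -
    have "gcycle g (g b) = gtail b @ [b]"
      using gsize_ge_3[OF b] gpath_snoc[of "g b" "gsize b - 1"] funpow_gsize_pred[OF b]
      by (simp add: gcycle_eq_gpath gsize_g[OF b] gtail_def)
    then show ?thesis by (simp add: gcycle_eq_Cons_gtail[OF b])
  qed
  then show ?case using Suc by simp
qed simp

lemma rotate_fcycle: "a \<in> Q1 \<Longrightarrow> rotate k (fcycle a) = fcycle ((f ^^ k) a)"
  by (induction k) (auto simp: fcycle_def)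

lemma hd_gcycle: "a \<in> Q1 \<Longrightarrow> hd (gcycle g a) = a"
  by (simp add: gcycle_eq_Cons_gtail)

lemma gcycle_inj: "a \<in> Q1 \<Longrightarrow> b \<in> Q1 \<Longrightarrow> gcycle g a = gcycle g b \<Longrightarrow> a = b"
  by (metis hd_gcycle)

lemma length_gcycle [simp]: "length (gcycle g a) = gsize a"
  by (simp add: gcycle_def)

lemma hd_fcycle [simp]: "hd (fcycle a) = a"
  by (simp add: fcycle_def)

lemma length_fcycle [simp]: "length (fcycle a) = 3"
  by (simp add: fcycle_def)

lemma gcycle_neq_fcycle: assumes "a \<in> Q1" shows "gcycle g a \<noteq> fcycle b"
  using f_neq_g[OF assms]
  by (auto simp: gcycle_eq_Cons_gtail[OF assms] gtail_eq_Cons[OF assms] fcycle_def)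

lemma rotate_inverse: "\<exists>k. rotate k (rotate j l) = l"
proof (cases "l = []")
  case False
  have "(length l - j mod length l + j) mod length l = (length l - j mod length l + j mod length l) mod length l"
    by (simp add: mod_add_right_eq)
  also have "\<dots> = 0" using False by simp
  finally show ?thesis by (intro exI[of _ "length l - j mod length l"]) (simp add: rotate_rotate)
qed simp

abbreviation W :: "'v \<times> 'a list \<Rightarrow> 'k" where
  "W \<equiv> potential s f g c \<Omega>f \<Omega>g"

lemma potential_eq: "W (v, l) = (\<Sum>\<omega>\<in>\<Omega>f. if (v, l) = (s \<omega>, fcycle \<omega>) then 1 else 0)
   - (\<Sum>\<omega>\<in>\<Omega>g. if (v, l) = (s \<omega>, gcycle g \<omega>) then c \<omega> else 0)"
  unfolding potential_def mon_def fcycle_def by (auto intro!: sum.cong)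

lemma potential_eq_0:
  assumes "\<forall>y\<in>Q1. l \<noteq> fcycle y \<and> l \<noteq> gcycle g y"
  shows "W (v, l) = 0"
proof -
  have "(\<Sum>\<omega>\<in>\<Omega>f. if (v, l) = (s \<omega>, fcycle \<omega>) then 1 else (0::'k)) = 0"
    using assms repf by (intro sum.neutral) (auto simp: is_orbit_reps_def)
  moreover have "(\<Sum>\<omega>\<in>\<Omega>g. if (v, l) = (s \<omega>, gcycle g \<omega>) then c \<omega> else 0) = 0"
    using assms repg by (intro sum.neutral) (auto simp: is_orbit_reps_def)
  ultimately show ?thesis by (simp add: potential_eq)
qed

lemma potential_fcycle:
  assumes y: "y \<in> Q1" shows "W (s y, fcycle y) = (if y \<in> \<Omega>f then 1 else 0)"
proof -
  have "(\<Sum>\<omega>\<in>\<Omega>f. if (s y, fcycle y) = (s \<omega>, fcycle \<omega>) then 1 else (0::'k))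
      = (\<Sum>\<omega>\<in>\<Omega>f. if \<omega> = y then 1 else 0)"
    by (intro sum.cong) (auto simp: fcycle_def)
  moreover have "(\<Sum>\<omega>\<in>\<Omega>g. if (s y, fcycle y) = (s \<omega>, gcycle g \<omega>) then c \<omega> else 0) = 0"
    using \<Omega>g_subset gcycle_neq_fcycle by (intro sum.neutral) (metis Pair_inject subsetD)
  ultimately show ?thesis using finite_\<Omega>f by (simp add: potential_eq)
qed

lemma potential_gcycle:
  assumes y: "y \<in> Q1" shows "W (s y, gcycle g y) = (if y \<in> \<Omega>g then - c y else 0)"
proof -
  have "(\<Sum>\<omega>\<in>\<Omega>g. if (s y, gcycle g y) = (s \<omega>, gcycle g \<omega>) then c \<omega> else 0)
      = (\<Sum>\<omega>\<in>\<Omega>g. if \<omega> = y then c \<omega> else 0)"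
    using \<Omega>g_subset y by (intro sum.cong) (auto dest: gcycle_inj)
  moreover have "(\<Sum>\<omega>\<in>\<Omega>f. if (s y, gcycle g y) = (s \<omega>, fcycle \<omega>) then 1 else (0::'k)) = 0"
    using y gcycle_neq_fcycle by (intro sum.neutral) auto
  ultimately show ?thesis using finite_\<Omega>g by (simp add: potential_eq)
qed

definition rotation_sum :: "'a list \<Rightarrow> 'k" where
  "rotation_sum l = (\<Sum>j<length l. W (s (hd (rotate j l)), rotate j l))"

lemma rotation_sum_fcycle: assumes "a \<in> Q1" shows "rotation_sum (fcycle a) = 1"
proof -
  have "rotation_sum (fcycle a) = (\<Sum>j<orbsize f a. if (f ^^ j) a \<in> \<Omega>f then 1 else 0)"
    unfolding rotation_sum_def using assms
    by (intro sum.cong) (auto simp: orbsize_f rotate_fcycle potential_fcycle)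
  also have "\<dots> = 1"
    using sum_funpow_orbit_reps[OF fbij fin1 assms repf, of "\<lambda>_. 1"] by simp
  finally show ?thesis .
qed

lemma rotation_sum_gcycle: assumes "a \<in> Q1" shows "rotation_sum (gcycle g a) = - c a"
proof -
  have "rotation_sum (gcycle g a)
      = - (\<Sum>j<gsize a. if (g ^^ j) a \<in> \<Omega>g then c ((g ^^ j) a) else 0)"
    unfolding rotation_sum_def using assms
    by (auto simp: rotate_gcycle potential_gcycle hd_gcycle simp flip: sum_negf intro!: sum.cong)
  also have "\<dots> = - c a"
    using sum_funpow_orbit_reps[OF gbij fin1 assms repg, of c] c_funpow_g[OF assms] by simp
  finally show ?thesis .
qed

lemma rotation_sum_eq_0:
  assumes "\<beta> \<in> Q1" "\<beta> # m \<noteq> fcycle \<beta>" "\<beta> # m \<noteq> gcycle g \<beta>"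
  shows "rotation_sum (\<beta> # m) = 0"
  unfolding rotation_sum_def
proof (intro sum.neutral ballI potential_eq_0 conjI notI)
  fix j y assume y: "y \<in> Q1"
  obtain k where k: "rotate k (rotate j (\<beta> # m)) = \<beta> # m" using rotate_inverse by blast
  { assume "rotate j (\<beta> # m) = fcycle y"
    then have "\<beta> # m = fcycle ((f ^^ k) y)" using k rotate_fcycle[OF y] by simp
    then show False using assms(2) by (simp add: fcycle_def) }
  { assume "rotate j (\<beta> # m) = gcycle g y"
    then have "\<beta> # m = gcycle g ((g ^^ k) y)" using k rotate_gcycle[OF y] by simp
    then show False using assms(3) y by (metis funpow_g_in_Q1 hd_gcycle list.sel(1)) }
qed

lemma cder_potential:
  assumes \<beta>: "\<beta> \<in> Q1"
  shows "cder Q0 Q1 s t \<beta> W (z, m) =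
     (if z = t \<beta> \<and> m = ftail \<beta> then 1 else 0) - (if z = t \<beta> \<and> m = gtail \<beta> then c \<beta> else 0)"
proof -
  have cder: "cder Q0 Q1 s t \<beta> W (z, m) = (if z = t \<beta> \<and> valid_path Q0 Q1 s t (s \<beta>, \<beta> # m)
     \<and> endpt t (s \<beta>) (\<beta> # m) = s \<beta> then rotation_sum (\<beta> # m) else 0)"
    by (simp add: cder_def rotation_sum_def)
  have "\<beta> # ftail \<beta> = fcycle \<beta>" "\<beta> # gtail \<beta> = gcycle g \<beta>"
    by (simp_all add: ftail_def fcycle_def gcycle_eq_Cons_gtail[OF \<beta>])
  moreover have "valid_path Q0 Q1 s t (s \<beta>, \<beta> # ftail \<beta>)" "endpt t (s \<beta>) (\<beta> # ftail \<beta>) = s \<beta>"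
    "valid_path Q0 Q1 s t (s \<beta>, \<beta> # gtail \<beta>)" "endpt t (s \<beta>) (\<beta> # gtail \<beta>) = s \<beta>"
    using ftail_valid[OF \<beta>] gtail_valid[OF \<beta>] \<beta> by (simp_all add: valid_path_def)
  ultimately show ?thesis
    using \<beta> ftail_neq_gtail[OF \<beta>] rotation_sum_fcycle rotation_sum_gcycle rotation_sum_eq_0
    unfolding cder by (auto simp: gcycle_eq_Cons_gtail fcycle_def ftail_def)
qed

abbreviation J :: "('v \<times> 'a list \<Rightarrow> 'k) set" where
  "J \<equiv> gen_ideal Q0 Q1 s t {cder Q0 Q1 s t \<alpha> W | \<alpha>. \<alpha> \<in> Q1}"

definition mon_cong :: "'v \<times> 'a list \<Rightarrow> 'k \<Rightarrow> 'v \<times> 'a list \<Rightarrow> bool" where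
  "mon_cong P k P' \<longleftrightarrow> (\<lambda>q. mon P q - k * mon P' q) \<in> J"

lemma endpt_in_Q0: "valid_path Q0 Q1 s t (v, p) \<Longrightarrow> endpt t v p \<in> Q0"
  by (cases p rule: rev_cases) (auto simp: valid_path_def endpt_def)

lemma valid_path_append: "valid_path Q0 Q1 s t (v, p @ q) \<longleftrightarrow>
   valid_path Q0 Q1 s t (v, p) \<and> valid_path Q0 Q1 s t (endpt t v p, q)"
  using endpt_in_Q0[of v p] by (auto simp: valid_path_def composable_append)

lemma split_append3_iff:
  "(length q \<le> length l \<and> drop (length l - length q) l = q
     \<and> length p \<le> length (take (length l - length q) l)
     \<and> take (length p) (take (length l - length q) l) = p
     \<and> drop (length p) (take (length l - length q) l) = m) \<longleftrightarrow> l = p @ m @ q"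
    (is "?split \<longleftrightarrow> _")
proof
  assume split: ?split
  then have "l = take (length l - length q) l @ q" "take (length l - length q) l = p @ m"
    by (metis append_take_drop_id)+
  then show "l = p @ m @ q" by simp
qed simp

lemma pmul_cder_potential:
  assumes \<beta>: "\<beta> \<in> Q1" and p: "endpt t v p = t \<beta>"
  shows "pmul t (pmul t (mon (v, p)) (cder Q0 Q1 s t \<beta> W)) (mon (s \<beta>, q))
    = (\<lambda>P. mon (v, p @ ftail \<beta> @ q) P - c \<beta> * mon (v, p @ gtail \<beta> @ q) P)"
proof
  fix P :: "'v \<times> 'a list"
  obtain u l where P: "P = (u, l)" by force
  have "endpt t v (p @ ftail \<beta>) = s \<beta>" "endpt t v (p @ gtail \<beta>) = s \<beta>"
    using p ftail_valid[OF \<beta>] gtail_valid[OF \<beta>] by (simp_all add: endpt_append)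
  then show "pmul t (pmul t (mon (v, p)) (cder Q0 Q1 s t \<beta> W)) (mon (s \<beta>, q)) P
       = mon (v, p @ ftail \<beta> @ q) P - c \<beta> * mon (v, p @ gtail \<beta> @ q) P"
    using ftail_neq_gtail[OF \<beta>] split_append3_iff[of q l p]
    unfolding P pmul_mon_right pmul_mon_left p cder_potential[OF \<beta>]
    by (auto simp: mon_def)
qed

lemma mon_cong_ftail_gtail:
  assumes \<beta>: "\<beta> \<in> Q1" and valid: "valid_path Q0 Q1 s t (v, p @ ftail \<beta> @ q)"
  shows "mon_cong (v, p @ ftail \<beta> @ q) (c \<beta>) (v, p @ gtail \<beta> @ q)"
    and "valid_path Q0 Q1 s t (v, p @ gtail \<beta> @ q)"
proof -
  have vp: "valid_path Q0 Q1 s t (v, p)"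
    and vr: "valid_path Q0 Q1 s t (endpt t v p, ftail \<beta> @ q)"
    using valid valid_path_append by auto
  have p: "endpt t v p = t \<beta>" using vr \<beta> by (simp add: valid_path_def ftail_def)
  have vq: "valid_path Q0 Q1 s t (s \<beta>, q)"
    using vr ftail_valid[OF \<beta>] p by (simp add: valid_path_append)
  have "pmul t (pmul t (mon (v, p)) (cder Q0 Q1 s t \<beta> W)) (mon (s \<beta>, q)) \<in> J"
    using \<beta> by (intro gen_ideal.gen mon_in_compl_alg vp vq) auto
  then show "mon_cong (v, p @ ftail \<beta> @ q) (c \<beta>) (v, p @ gtail \<beta> @ q)"
    unfolding mon_cong_def pmul_cder_potential[OF \<beta> p] .
  show "valid_path Q0 Q1 s t (v, p @ gtail \<beta> @ q)"
    using vp vq p gtail_valid[OF \<beta>] \<beta>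
    by (simp add: valid_path_def composable_append endpt_append)
qed

lemma mon_cong_refl: "mon_cong P 1 P"
  by (simp add: mon_cong_def gen_ideal.zero)

lemma mon_cong_trans:
  assumes "mon_cong P k P'" "mon_cong P' k' P''"
  shows "mon_cong P (k * k') P''"
proof -
  have "(\<lambda>q. (mon P q - k * mon P' q) + k * (mon P' q - k' * mon P'' q)) \<in> J"
    using gen_ideal.add[OF assms(1)[unfolded mon_cong_def]
        gen_ideal_scale[OF assms(2)[unfolded mon_cong_def]]] .
  then show ?thesis unfolding mon_cong_def by (simp add: algebra_simps)
qed

lemma mon_cong_sym:
  assumes "mon_cong P k P'" "k \<noteq> 0"
  shows "mon_cong P' (1 / k) P"
proof -
  have "(\<lambda>q. (- 1 / k) * (mon P q - k * mon P' q)) \<in> J"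
    using gen_ideal_scale[OF assms(1)[unfolded mon_cong_def]] .
  moreover have "(- 1 / k) * (mon P q - k * mon P' q) = mon P' q - (1 / k) * mon P q" for q
    using assms(2) by (simp add: field_simps)
  ultimately show ?thesis unfolding mon_cong_def by simp
qed

text \<open>Multiples of arbitrarily long paths tend to \<open>0\<close> in the arrow-ideal-adic topology, so a
  monomial congruent to such multiples lies in the closure of \<open>J\<close>.\<close>

definition cong_long :: "'v \<times> 'a list \<Rightarrow> bool" where
  "cong_long P \<longleftrightarrow> (\<forall>N. \<exists>k P'. mon_cong P k P' \<and> N \<le> length (snd P'))"

lemma cong_long_mon_cong: "mon_cong P k P' \<Longrightarrow> cong_long P' \<Longrightarrow> cong_long P"
  unfolding cong_long_def by (meson mon_cong_trans)

lemma mon_in_closure_if_cong_long: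
  assumes "cong_long P" shows "mon P \<in> madic_closure J"
  unfolding madic_closure_def
proof (intro CollectI allI)
  fix N
  obtain k P' where P': "mon_cong P k P'" "N \<le> length (snd P')"
    using assms unfolding cong_long_def by blast
  show "\<exists>y\<in>J. \<forall>q. length (snd q) < N \<longrightarrow> mon P q = y q"
  proof (intro bexI allI impI)
    show "(\<lambda>q. mon P q - k * mon P' q) \<in> J" using P'(1) unfolding mon_cong_def .
    fix q :: "'v \<times> 'a list" assume "length (snd q) < N"
    then show "mon P q = mon P q - k * mon P' q" using P'(2) by (auto simp: mon_def)
  qed
qed

lemma cong_long_if_mon_cong_self:
  assumes "mon_cong P k P" "k \<noteq> 1"
  shows "cong_long P"
proof -
  have "(\<lambda>q. (1 / (1 - k)) * (mon P q - k * mon P q)) \<in> J"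
    using gen_ideal_scale[OF assms(1)[unfolded mon_cong_def]] .
  moreover have "(1 / (1 - k)) * (mon P q - k * mon P q) = mon P q" for q
    using assms(2) by (simp add: field_simps)
  ultimately have "mon_cong P 0 P'" for P'
    unfolding mon_cong_def by simp
  then show ?thesis
    unfolding cong_long_def by (metis length_replicate order_refl snd_conv)
qed

section \<open>Paths through \<open>x f(x) g(f(x))\<close>\<close>

definition fg_path :: "'a \<Rightarrow> 'a list" where
  "fg_path x = [x, f x, g (f x)]"

text \<open>Two commutativity relations move the pattern along: with \<open>\<gamma> = f\<^sup>2(x)\<close>, first
  \<open>x f(x) = ftail \<gamma>\<close> is replaced by \<open>gtail \<gamma>\<close>, whose last arrows are \<open>\<eta> \<delta>\<close> with
  \<open>g(\<delta>) = \<gamma>\<close>; then \<open>\<delta> g(f(x)) = ftail \<epsilon>\<close> for \<open>\<epsilon> = f\<^sup>2(\<delta>)\<close> is replaced by \<open>gtail \<epsilon>\<close>,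
  which starts with \<open>g(\<epsilon>) g\<^sup>2(\<epsilon>) = f(\<eta>) g(f(\<eta>))\<close>.\<close>

lemma fg_path_step:
  assumes x: "x \<in> Q1" and valid: "valid_path Q0 Q1 s t (v, u @ fg_path x @ w)"
  defines "\<gamma> \<equiv> f (f x)"
  defines "\<eta> \<equiv> (g ^^ (gsize \<gamma> - 3)) (g \<gamma>)"
  defines "\<epsilon> \<equiv> f (f (g \<eta>))"
  defines "u' \<equiv> u @ gpath (g \<gamma>) (gsize \<gamma> - 3)"
  defines "w' \<equiv> gpath (g (g (g \<epsilon>))) (gsize \<epsilon> - 3) @ w"
  shows "mon_cong (v, u @ fg_path x @ w) (c \<gamma> * c \<epsilon>) (v, u' @ fg_path \<eta> @ w')"
    and "valid_path Q0 Q1 s t (v, u' @ fg_path \<eta> @ w')"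
proof -
  define \<delta> where "\<delta> = g \<eta>"
  have \<gamma>: "\<gamma> \<in> Q1" and \<eta>: "\<eta> \<in> Q1" and \<delta>: "\<delta> \<in> Q1" and \<epsilon>: "\<epsilon> \<in> Q1"
    using x by (simp_all add: \<gamma>_def \<eta>_def \<delta>_def \<epsilon>_def)
  have n3: "3 \<le> gsize \<gamma>" "3 \<le> gsize \<epsilon>" using gsize_ge_3 \<gamma> \<epsilon> by auto
  have g\<delta>: "g \<delta> = \<gamma>"
  proof -
    have "g \<delta> = (g ^^ (Suc (Suc (Suc (gsize \<gamma> - 3))))) \<gamma>"
      unfolding \<delta>_def \<eta>_def by (simp add: funpow_swap1)
    then show ?thesis using n3 funpow_gsize[OF \<gamma>] by (simp add: numeral_3_eq_3 Suc_diff_Suc)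
  qed
  have f\<epsilon>: "f \<epsilon> = \<delta>" using \<delta> by (simp add: \<epsilon>_def \<delta>_def)
  have f\<delta>: "f \<delta> = g (f x)"
  proof (rule f_eq_g_if_same_target[OF \<delta> f_in_Q1[OF x]])
    show "t \<delta> = t (f x)" using s_g[OF \<delta>] g\<delta> x by (simp add: \<gamma>_def)
    show "\<delta> \<noteq> f x" using f_neq_g[OF f_in_Q1[OF x]] g\<delta> by (auto simp: \<gamma>_def)
  qed
  have f\<eta>: "f \<eta> = g \<epsilon>"
  proof (rule f_eq_g_if_same_target[OF \<eta> \<epsilon>])
    show "t \<eta> = t \<epsilon>" using s_g[OF \<eta>] \<delta> by (simp add: \<epsilon>_def \<delta>_def)
    show "\<eta> \<noteq> \<epsilon>" using f_neq_g[OF \<eta>] f\<epsilon> by (auto simp: \<delta>_def)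
  qed
  have gtail_\<gamma>: "gtail \<gamma> = gpath (g \<gamma>) (gsize \<gamma> - 3) @ [\<eta>, \<delta>]"
  proof -
    have "gsize \<gamma> - 1 = Suc (Suc (gsize \<gamma> - 3))" using n3 by simp
    then show ?thesis by (simp add: gtail_def gpath_snoc \<delta>_def \<eta>_def)
  qed
  have gtail_\<epsilon>: "gtail \<epsilon> = [g \<epsilon>, g (g \<epsilon>)] @ gpath (g (g (g \<epsilon>))) (gsize \<epsilon> - 3)"
    using n3 gtail_eq_Cons[OF \<epsilon>] gpath_Suc[of "g (g \<epsilon>)" "gsize \<epsilon> - 3"]
    by (simp add: numeral_3_eq_3 numeral_2_eq_2 Suc_diff_Suc)
  have path0: "u @ fg_path x @ w = u @ ftail \<gamma> @ (g (f x) # w)"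
    using x by (simp add: fg_path_def ftail_def \<gamma>_def)
  have path1: "u @ gtail \<gamma> @ (g (f x) # w) = (u @ gpath (g \<gamma>) (gsize \<gamma> - 3) @ [\<eta>]) @ ftail \<epsilon> @ w"
    by (simp add: gtail_\<gamma> ftail_def f\<epsilon> f\<delta>)
  have path2: "(u @ gpath (g \<gamma>) (gsize \<gamma> - 3) @ [\<eta>]) @ gtail \<epsilon> @ w = u' @ fg_path \<eta> @ w'"
    by (simp add: gtail_\<epsilon> fg_path_def f\<eta> u'_def w'_def)
  note step1 = mon_cong_ftail_gtail[OF \<gamma> valid[unfolded path0]]
  note step2 = mon_cong_ftail_gtail[OF \<epsilon> step1(2)[unfolded path1]]
  show "mon_cong (v, u @ fg_path x @ w) (c \<gamma> * c \<epsilon>) (v, u' @ fg_path \<eta> @ w')"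
    unfolding path0 path2[symmetric] by (rule mon_cong_trans[OF step1(1) step2(1)[folded path1]])
  show "valid_path Q0 Q1 s t (v, u' @ fg_path \<eta> @ w')"
    using step2(2) unfolding path2 .
qed

text \<open>Under \<open>(\<star>)\<close> each step of \<open>fg_path_step\<close> lengthens the path: either
  \<open>n\<^sub>\<epsilon> \<ge> 4\<close>, or \<open>n\<^bsub>f(\<epsilon>)\<^esub> = n\<^sub>\<gamma> \<ge> 4\<close> since \<open>f(\<epsilon>) = g(\<eta>)\<close> lies in the \<open>g\<close>-orbit of \<open>\<gamma>\<close>.\<close>

lemma fg_path_cong_long_star:
  assumes star: "\<forall>\<alpha>\<in>Q1. 4 \<le> gsize \<alpha> \<or> 4 \<le> gsize (f \<alpha>)"
    and x: "x \<in> Q1" and valid: "valid_path Q0 Q1 s t (v, u @ fg_path x @ w)"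
  shows "cong_long (v, u @ fg_path x @ w)"
proof -
  have "\<exists>k P'. mon_cong (v, u @ fg_path x @ w) k P' \<and> N + length u + length w \<le> length (snd P')"
    if "x \<in> Q1" "valid_path Q0 Q1 s t (v, u @ fg_path x @ w)" for N x u w
    using that
  proof (induction N arbitrary: x u w)
    case 0
    then show ?case using mon_cong_refl by fastforce
  next
    case (Suc N)
    define \<gamma> where "\<gamma> = f (f x)"
    define \<eta> where "\<eta> = (g ^^ (gsize \<gamma> - 3)) (g \<gamma>)"
    define \<epsilon> where "\<epsilon> = f (f (g \<eta>))"
    define u' where "u' = u @ gpath (g \<gamma>) (gsize \<gamma> - 3)"
    define w' where "w' = gpath (g (g (g \<epsilon>))) (gsize \<epsilon> - 3) @ w"
    note step = fg_path_step[OF Suc.prems,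
        folded \<gamma>_def, folded \<eta>_def, folded \<epsilon>_def u'_def, folded w'_def]
    have \<gamma>: "\<gamma> \<in> Q1" and \<eta>: "\<eta> \<in> Q1" and \<epsilon>: "\<epsilon> \<in> Q1"
      using Suc.prems(1) by (simp_all add: \<gamma>_def \<eta>_def \<epsilon>_def)
    have "gsize (f \<epsilon>) = gsize \<gamma>"
      using \<eta> gsize_g[OF \<eta>] gsize_funpow_g[of "g \<gamma>"] gsize_g[OF \<gamma>] \<gamma> by (simp add: \<epsilon>_def \<eta>_def)
    then have "length u + length w < length u' + length w'"
      using star \<epsilon> gsize_ge_3[OF \<gamma>] gsize_ge_3[OF \<epsilon>] by (auto simp: u'_def w'_def)
    moreover obtain k P' where P': "mon_cong (v, u' @ fg_path \<eta> @ w') k P'"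
      and "N + length u' + length w' \<le> length (snd P')"
      using Suc.IH[OF \<eta> step(2)] by blast
    ultimately have "Suc N + length u + length w \<le> length (snd P')" by linarith
    then show ?case using mon_cong_trans[OF step(1) P'] by blast
  qed
  then show ?thesis
    using x valid unfolding cong_long_def by (meson le_add1 le_trans)
qed

end

section \<open>The diamond case\<close>

locale diamond_quiver = triangulation_quiver +
  assumes gsize_3: "\<forall>\<alpha>\<in>Q1. orbsize g \<alpha> = 3"
begin

lemma g_g_g [simp]: "a \<in> Q1 \<Longrightarrow> g (g (g a)) = a"
  using funpow_gsize[of a] gsize_3 by (simp add: numeral_3_eq_3)

text \<open>With \<open>f\<^sup>3 = g\<^sup>3 = 1\<close> and \<open>g f\<^sup>2 g = f\<close> (\<open>g_f_f_g\<close>) these are the relations of the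
  tetrahedral group; the next three rules complete them to a confluent rewriting system, so the
  simplifier brings words in \<open>f\<close> and \<open>g\<close> to normal form.\<close>

lemma g_g_f [simp]: "a \<in> Q1 \<Longrightarrow> g (g (f a)) = f (f (g a))"
  by (metis g_f_f_g g_g_g f_in_Q1 g_in_Q1)

lemma g_f_f [simp]: "a \<in> Q1 \<Longrightarrow> g (f (f a)) = f (g (g a))"
  by (metis g_f_f_g g_g_g g_in_Q1)

lemma g_f_g [simp]: "a \<in> Q1 \<Longrightarrow> g (f (g a)) = f (g (f a))"
  by (metis g_f_f_g g_g_f f_f_f f_in_Q1 g_in_Q1)

lemma orbit_g_eq: assumes "a \<in> Q1" shows "orbit g a = {a, g a, g (g a)}"
proof -
  have "{..<3::nat} = {0, 1, 2}" by auto
  then show ?thesis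
    using orbit_eq_funpow_image[OF gbij fin1 assms] gsize_3 assms by (simp add: numeral_2_eq_2)
qed

lemma f_notin_orbit_g: assumes a: "a \<in> Q1" shows "f a \<notin> orbit g a"
proof -
  have "f a \<noteq> g (g a)"
  proof
    assume "f a = g (g a)"
    then have "s (g a) = t (g a)" using a by (metis g_in_Q1 s_f s_g)
    then show False using noloop g_in_Q1[OF a] by blast
  qed
  then show ?thesis using f_distinct[OF a] f_neq_g[OF a] by (simp add: orbit_g_eq[OF a])
qed

lemma orbit_g_neq_if_f:
  assumes "r \<in> Q1" "r' \<in> Q1" "z \<in> orbit g r" "f z \<in> orbit g r'"
  shows "orbit g r \<noteq> orbit g r'"
proof
  assume "orbit g r = orbit g r'"
  moreover have "z \<in> Q1" using assms(1,3) by (auto simp: orbit_def)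
  ultimately show False
    using assms f_notin_orbit_g orbit_eq_if_mem[OF gbij fin1] by metis
qed

text \<open>The \<open>g\<close>-orbits of \<open>x, f(x), f\<^sup>2(x), f(g(x))\<close> are distinct, and their union is closed
  under \<open>f\<close> and \<open>g\<close>, hence all of \<open>Q\<^sub>1\<close>.\<close>

lemma prod_c_\<Omega>g_diamond:
  assumes x: "x \<in> Q1"
  shows "(\<Prod>\<alpha>\<in>\<Omega>g. c \<alpha>) = c x * c (f x) * c (f (f x)) * c (f (g x))"
proof -
  have o1: "orbit g x = {x, g x, g (g x)}"
    using orbit_g_eq x by simp
  have o2: "orbit g (f x) = {f x, g (f x), f (f (g x))}"
    using orbit_g_eq x by simp
  have o3: "orbit g (f (f x)) = {f (f x), f (g (g x)), f (f (g (f x)))}"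
    using orbit_g_eq x by simp
  have o4: "orbit g (f (g x)) = {f (g x), f (g (f x)), f (f (g (g x)))}"
    using orbit_g_eq x by simp
  have "orbit g x \<noteq> orbit g (f x)"
    by (rule orbit_g_neq_if_f[of _ _ x]) (use x o1 o2 in simp_all)
  moreover have "orbit g x \<noteq> orbit g (f (f x))"
    by (rule not_sym, rule orbit_g_neq_if_f[of _ _ "f (f x)"]) (use x o3 o1 in simp_all)
  moreover have "orbit g x \<noteq> orbit g (f (g x))"
    by (rule orbit_g_neq_if_f[of _ _ "g x"]) (use x o1 o4 in simp_all)
  moreover have "orbit g (f x) \<noteq> orbit g (f (f x))"
    by (rule orbit_g_neq_if_f[of _ _ "f x"]) (use x o2 o3 in simp_all)
  moreover have "orbit g (f x) \<noteq> orbit g (f (g x))"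
    by (rule not_sym, rule orbit_g_neq_if_f[of _ _ "f (g x)"]) (use x o4 o2 in simp_all)
  moreover have "orbit g (f (f x)) \<noteq> orbit g (f (g x))"
    by (rule orbit_g_neq_if_f[of _ _ "f (g (g x))"]) (use x o3 o4 in simp_all)
  ultimately have distinct: "distinct (map (orbit g) [x, f x, f (f x), f (g x)])"
    by simp
  have "orbit g x \<union> orbit g (f x) \<union> orbit g (f (f x)) \<union> orbit g (f (g x)) = Q1"
    by (rule closed_subset_eq_Q1[of _ x]) (use x in \<open>auto simp: o1 o2 o3 o4\<close>)
  then have cover: "Q1 \<subseteq> (\<Union>r\<in>set [x, f x, f (f x), f (g x)]. orbit g r)" by auto
  show ?thesis using prod_c_\<Omega>g[OF _ cover distinct] x by (simp add: mult.assoc)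
qed

lemma fg_path_step_diamond:
  assumes x: "x \<in> Q1" and valid: "valid_path Q0 Q1 s t (v, u @ fg_path x @ w)"
  shows "mon_cong (v, u @ fg_path x @ w) (c (f (f x)) * c (f (g (f x))))
           (v, u @ fg_path (f (g (g x))) @ w)"
    and "valid_path Q0 Q1 s t (v, u @ fg_path (f (g (g x))) @ w)"
  using fg_path_step[OF x valid] x gsize_3 by (simp_all add: gpath_def)

lemma fg_path_cong_long_diamond:
  assumes "(\<Prod>\<alpha>\<in>\<Omega>g. c \<alpha>) \<noteq> 1"
    and x: "x \<in> Q1" and valid: "valid_path Q0 Q1 s t (v, u @ fg_path x @ w)"
  shows "cong_long (v, u @ fg_path x @ w)"
proof -
  note step1 = fg_path_step_diamond[OF x valid]
  note step2 = fg_path_step_diamond[OF _ step1(2)]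
  have "mon_cong (v, u @ fg_path x @ w)
      (c (f (f x)) * c (f (g (f x))) * (c (g (g x)) * c (f (f (g x))))) (v, u @ fg_path x @ w)"
    using mon_cong_trans[OF step1(1) step2(1)] x by simp
  moreover have "c (f (g (f x))) = c (f (g x))" "c (f (f (g x))) = c (f x)" "c (g (g x)) = c x"
    using c_funpow_g[of "f (g x)" 1] c_funpow_g[of "f x" 2] c_funpow_g[of x 2] x
    by (simp_all add: numeral_2_eq_2)
  ultimately have "mon_cong (v, u @ fg_path x @ w) (\<Prod>\<alpha>\<in>\<Omega>g. c \<alpha>) (v, u @ fg_path x @ w)"
    using x by (simp add: prod_c_\<Omega>g_diamond ac_simps)
  then show ?thesis using assms(1) by (rule cong_long_if_mon_cong_self)
qed

end

context triangulation_quiver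
begin

definition star_or_diamond :: bool where
  "star_or_diamond \<longleftrightarrow> (\<forall>\<alpha>\<in>Q1. 4 \<le> gsize \<alpha> \<or> 4 \<le> gsize (f \<alpha>))
      \<or> ((\<forall>\<alpha>\<in>Q1. gsize \<alpha> = 3) \<and> (\<Prod>\<alpha>\<in>\<Omega>g. c \<alpha>) \<noteq> 1)"

lemma fg_path_cong_long:
  assumes cond: "star_or_diamond"
    and x: "x \<in> Q1" and valid: "valid_path Q0 Q1 s t (v, u @ fg_path x @ w)"
  shows "cong_long (v, u @ fg_path x @ w)"
  using cond unfolding star_or_diamond_def
proof
  assume "\<forall>\<alpha>\<in>Q1. 4 \<le> gsize \<alpha> \<or> 4 \<le> gsize (f \<alpha>)"
  then show ?thesis using fg_path_cong_long_star[OF _ x valid] by blast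
next
  assume diamond: "(\<forall>\<alpha>\<in>Q1. gsize \<alpha> = 3) \<and> (\<Prod>\<alpha>\<in>\<Omega>g. c \<alpha>) \<noteq> 1"
  interpret diamond_quiver Q0 Q1 s t f g c \<Omega>f \<Omega>g
    using diamond by unfold_locales blast
  show ?thesis using diamond fg_path_cong_long_diamond[OF _ x valid] by blast
qed

lemma cong_long_fcycle_path:
  assumes cond: "star_or_diamond"
    and \<alpha>: "\<alpha> \<in> Q1"
  shows "cong_long (s \<alpha>, [\<alpha>, f \<alpha>, f (f \<alpha>), \<alpha>])"
proof -
  have valid: "valid_path Q0 Q1 s t (s \<alpha>, [\<alpha>, f \<alpha>] @ ftail (f \<alpha>) @ [])"
    using \<alpha> by (simp add: valid_path_def ftail_def)
  note to_gtail = mon_cong_ftail_gtail[OF f_in_Q1[OF \<alpha>] valid]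
  have eq: "[\<alpha>, f \<alpha>] @ gtail (f \<alpha>) @ [] = [] @ fg_path \<alpha> @ gpath (g (g (f \<alpha>))) (gsize (f \<alpha>) - 2)"
    using \<alpha> by (simp add: gtail_eq_Cons fg_path_def)
  have "cong_long (s \<alpha>, [] @ fg_path \<alpha> @ gpath (g (g (f \<alpha>))) (gsize (f \<alpha>) - 2))"
    using fg_path_cong_long[OF cond \<alpha> to_gtail(2)[unfolded eq]] .
  then have "cong_long (s \<alpha>, [\<alpha>, f \<alpha>] @ ftail (f \<alpha>) @ [])"
    using cong_long_mon_cong[OF to_gtail(1)] unfolding eq by blast
  then show ?thesis using \<alpha> by (simp add: ftail_def)
qed

lemma cong_long_gcycle_path:
  assumes cond: "star_or_diamond"
    and \<alpha>: "\<alpha> \<in> Q1"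
  shows "cong_long (s \<alpha>, gcycle g \<alpha> @ [\<alpha>])"
proof -
  have "mon_cong (s \<alpha>, [\<alpha>] @ ftail \<alpha> @ [\<alpha>]) (c \<alpha>) (s \<alpha>, [\<alpha>] @ gtail \<alpha> @ [\<alpha>])"
    by (rule mon_cong_ftail_gtail(1)[OF \<alpha>]) (use \<alpha> in \<open>simp add: valid_path_def ftail_def\<close>)
  then have "mon_cong (s \<alpha>, gcycle g \<alpha> @ [\<alpha>]) (1 / c \<alpha>) (s \<alpha>, [\<alpha>, f \<alpha>, f (f \<alpha>), \<alpha>])"
    using mon_cong_sym cnz \<alpha> by (simp add: gcycle_eq_Cons_gtail ftail_def)
  then show ?thesis using cong_long_fcycle_path[OF cond \<alpha>] by (rule cong_long_mon_cong)
qed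

end

theorem lemma4p1:
  fixes Q0 :: "'v set" and Q1 :: "'a set" and s t :: "'a \<Rightarrow> 'v"
    and f g :: "'a \<Rightarrow> 'a" and c :: "'a \<Rightarrow> 'k::field"
    and \<Omega>f \<Omega>g :: "'a set"
  assumes fin0: "finite Q0" and fin1: "finite Q1"
    and st: "\<forall>a\<in>Q1. s a \<in> Q0 \<and> t a \<in> Q0"
    and conn: "\<forall>u\<in>Q0. \<forall>v\<in>Q0. (u, v) \<in> ({(s a, t a) | a. a \<in> Q1} \<union> {(t a, s a) | a. a \<in> Q1})\<^sup>*"
    and noloop: "\<forall>a\<in>Q1. s a \<noteq> t a"
    and no2cyc: "\<forall>a\<in>Q1. \<forall>b\<in>Q1. \<not> (s a = t b \<and> t a = s b)"
    and out2: "\<forall>v\<in>Q0. card {a\<in>Q1. s a = v} = 2"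
    and in2: "\<forall>v\<in>Q0. card {a\<in>Q1. t a = v} = 2"
    and fbij: "bij_betw f Q1 Q1" and gbij: "bij_betw g Q1 Q1"
    and fg: "\<forall>\<alpha>\<in>Q1. {f \<alpha>, g \<alpha>} = {\<beta>\<in>Q1. s \<beta> = t \<alpha>}"
    and f3: "\<forall>\<alpha>\<in>Q1. f (f (f \<alpha>)) = \<alpha>"
    and cnz: "\<forall>\<alpha>\<in>Q1. c \<alpha> \<noteq> 0"
    and cconst: "\<forall>\<alpha>\<in>Q1. c (g \<alpha>) = c \<alpha>"
    and repf: "is_orbit_reps f Q1 \<Omega>f"
    and repg: "is_orbit_reps g Q1 \<Omega>g"
    and cond: "(\<forall>\<alpha>\<in>Q1. orbsize g \<alpha> \<ge> 4 \<or> orbsize g (f \<alpha>) \<ge> 4)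
             \<or> ((\<forall>\<alpha>\<in>Q1. orbsize g \<alpha> = 3) \<and> (\<Prod>\<alpha>\<in>\<Omega>g. c \<alpha>) \<noteq> 1)"
    and \<alpha>: "\<alpha> \<in> Q1"
  shows "mon (s \<alpha>, [\<alpha>, f \<alpha>, f (f \<alpha>), \<alpha>])
           \<in> jac_kernel Q0 Q1 s t (potential s f g c \<Omega>f \<Omega>g)
       \<and> mon (s \<alpha>, gcycle g \<alpha> @ [\<alpha>])
           \<in> jac_kernel Q0 Q1 s t (potential s f g c \<Omega>f \<Omega>g)"
proof -
  interpret triangulation_quiver Q0 Q1 s t f g c \<Omega>f \<Omega>g
    using assms by unfold_locales auto
  show ?thesis
    using mon_in_closure_if_cong_long[OF cong_long_fcycle_path[OF _ \<alpha>]]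
      mon_in_closure_if_cong_long[OF cong_long_gcycle_path[OF _ \<alpha>]] cond
    by (simp add: jac_kernel_def star_or_diamond_def)
qed

end
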